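(* The function $\mu\mapsto\mathcal{I}_\mathrm{sym}(\mu)$ is weakly* lower semicontinuous on $\mathrm{Prob}([-R,R]^n)$.
   Context: Fix $R>0$ and $n\in\mathbb{N}$. $\mathrm{Prob}([-R,R]^n)$ denotes the Borel probability measures on $[-R,R]^n$; $C_\mathbb{R}([-R,R]^n)$ real continuous functions with sup-norm; $\mu(h)=\int h\,d\mu$; the $i$th marginal $\mu_i$ of $\mu$ is its image under the $i$th coordinate projection. For $\mathbf{x}\in\mathbb{R}^N$ let $\kappa_N(\mathbf{x})=\frac1N\sum_jx_j$ (powers coordinatewise); $[-R,R]_\le^N$ is the set of vectors in $[-R,R]^N$ with nondecreasing coordinates; $S_N$ acts by $\sigma(\mathbf{x})=(x_{\sigma^{-1}(1)},\dots,x_{\sigma^{-1}(N)})$. An approximating sequence for $(\mu_1,\dots,\mu_n)$ is $\Xi(N)=(\xi_1(N),\dots,\xi_n(N))$ with $\xi_i(N)\in[-R,R]_\le^N$ and $\kappa_N(\xi_i(N)^k)\to\int x^k\,d\mu_i$ for all $k$. For $h\in C_\mathbb{R}([-R,R]^n)$, $\kappa_N(h(\mathbf{x}_1,\dots,\mathbf{x}_n))=\frac1N\sum_{j=1}^Nh(x_{1j},\dots,x_{nj})$. The mutual pressure is $$P_\mathrm{sym}(h:\mu_1,\dots,\mu_n)=\limsup_{N\to\infty}\frac1N\log\Biggl[\frac1{(N!)^n}\sum_{\sigma_1,\dots,\sigma_n\in S_N}\exp\bigl(N\kappa_N(h(\sigma_1(\xi_1(N)),\dots,\sigma_n(\xi_n(N))))\bigr)\Biggr]$$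 (independent of the approximating sequence). For $\mu\in\mathrm{Prob}([-R,R]^n)$ with marginals $\mu_1,\dots,\mu_n$, $\mathcal{I}_\mathrm{sym}(\mu)=\sup\{\mu(h)-P_\mathrm{sym}(h:\mu_1,\dots,\mu_n):h\in C_\mathbb{R}([-R,R]^n)\}$. *)

theory Defs
  imports "HOL-Probability.Probability"
begin

text \<open>The cube [-R,R]^n, with coordinates indexed by the finite type 'n (so n = CARD('n)).\<close>
definition cube :: "real \<Rightarrow> (real^'n) set" where
  "cube R = {x. \<forall>i. -R \<le> x $ i \<and> x $ i \<le> R}"

definition ProbCube :: "real \<Rightarrow> (real^'n) measure set" where
  "ProbCube R = {\<mu>. prob_space \<mu> \<and> space \<mu> = cube R \<and>
                     sets \<mu> = sets (restrict_space borel (cube R))}"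

definition marginal :: "'n \<Rightarrow> (real^'n) measure \<Rightarrow> real measure" where
  "marginal i \<mu> = distr \<mu> borel (\<lambda>x. x $ i)"

definition kappa :: "nat \<Rightarrow> (nat \<Rightarrow> real) \<Rightarrow> real" where
  "kappa N x = (\<Sum>j<N. x j) / real N"

definition approx_seq :: "real \<Rightarrow> ('n \<Rightarrow> real measure) \<Rightarrow> (nat \<Rightarrow> 'n \<Rightarrow> nat \<Rightarrow> real) \<Rightarrow> bool" where
  "approx_seq R m \<Xi> \<longleftrightarrow>
     (\<forall>N i. (\<forall>j<N. -R \<le> \<Xi> N i j \<and> \<Xi> N i j \<le> R) \<and>
            (\<forall>j k. j \<le> k \<and> k < N \<longrightarrow> \<Xi> N i j \<le> \<Xi> N i k)) \<and>
     (\<forall>i k. (\<lambda>N. kappa N (\<lambda>j. (\<Xi> N i j) ^ k)) \<longlonglongrightarrow> integral\<^sup>L (m i) (\<lambda>x. x ^ k))"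

definition perm_act :: "(nat \<Rightarrow> nat) \<Rightarrow> (nat \<Rightarrow> real) \<Rightarrow> nat \<Rightarrow> real" where
  "perm_act \<sigma> x = (\<lambda>j. x (inv \<sigma> j))"

definition pressure_term :: "((real^'n) \<Rightarrow> real) \<Rightarrow> (nat \<Rightarrow> 'n \<Rightarrow> nat \<Rightarrow> real) \<Rightarrow> nat \<Rightarrow> real" where
  "pressure_term h \<Xi> N =
     ln ((1 / (fact N) ^ CARD('n)) *
         (\<Sum>\<sigma> \<in> PiE UNIV (\<lambda>_. {\<sigma>. \<sigma> permutes {..<N}}).
            exp (real N * kappa N (\<lambda>j. h (\<chi> i. perm_act (\<sigma> i) (\<Xi> N i) j))))) / real N"

text \<open>Mutual pressure P_sym(h : m_1,...,m_n), computed with an (arbitrarily chosen)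
  approximating sequence; the paper notes it is independent of this choice.\<close>
definition P_sym :: "real \<Rightarrow> ((real^'n) \<Rightarrow> real) \<Rightarrow> ('n \<Rightarrow> real measure) \<Rightarrow> ereal" where
  "P_sym R h m = limsup (\<lambda>N. ereal (pressure_term h (SOME \<Xi>. approx_seq R m \<Xi>) N))"

definition I_sym :: "real \<Rightarrow> (real^'n) measure \<Rightarrow> ereal" where
  "I_sym R \<mu> = (SUP h \<in> {h. continuous_on (cube R) h}.
                  ereal (integral\<^sup>L \<mu> h) - P_sym R h (\<lambda>i. marginal i \<mu>))"

definition weak_star_conv :: "real \<Rightarrow> (nat \<Rightarrow> (real^'n) measure) \<Rightarrow> (real^'n) measure \<Rightarrow> bool" where
  "weak_star_conv R \<mu>s \<mu> \<longleftrightarrow>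
     (\<forall>h :: (real^'n) \<Rightarrow> real. continuous_on (cube R) h \<longrightarrow>
          (\<lambda>k. integral\<^sup>L (\<mu>s k) h) \<longlonglongrightarrow> integral\<^sup>L \<mu> h)"

end

theory Submission
  imports Defs
begin

text \<open>\<open>I_sym\<close> is a supremum over continuous \<open>h\<close> of \<open>\<mu> \<mapsto> \<mu>(h) - P_sym(h : \<mu>\<^sub>1, \<dots>, \<mu>\<^sub>n)\<close>, and
  \<open>\<mu>(h)\<close> is weak* continuous, so it suffices that the mutual pressure is weak* upper semicontinuous
  in \<open>\<mu>\<close>. Uniformly in the permutations, the pressure term moves by at most \<open>\<epsilon>\<close> when the
  approximating vectors move by less than some \<open>\<delta>\<close> in normalised \<open>\<ell>\<^sup>1\<close> distance. For nondecreasing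
  vectors this distance is bounded by the mesh of a grid plus the differences of finitely many
  averages of continuous ramp functions, and these averages converge to integrals against the
  marginals. Hence weak* convergence \<open>\<mu>\<^sub>k \<rightarrow> \<mu>\<close> makes the approximating vectors of \<open>\<mu>\<^sub>k\<close> eventually
  \<open>\<ell>\<^sup>1\<close>-close to those of \<open>\<mu>\<close>. Since \<open>P_sym\<close> is evaluated on an approximating sequence picked by
  Hilbert choice, one also needs that such sequences exist: quantile vectors on a grid of mesh
  of order \<open>N\<^sup>-\<^sup>1\<^sup>/\<^sup>2\<close> will do.\<close>

abbreviation marginals :: "(real^'n) measure \<Rightarrow> 'n \<Rightarrow> real measure" where
  "marginals \<mu> \<equiv> (\<lambda>i. marginal i \<mu>)"

abbreviation perm_tuples :: "nat \<Rightarrow> ('n \<Rightarrow> nat \<Rightarrow> nat) set" where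
  "perm_tuples N \<equiv> PiE UNIV (\<lambda>_. {\<sigma>. \<sigma> permutes {..<N}})"

lemma ln_mean_exp_le_shift:
  fixes a b :: "'s \<Rightarrow> real"
  assumes S: "finite S" "S \<noteq> {}" and F: "F > 0" and N: "N > 0"
    and ab: "\<And>s. s \<in> S \<Longrightarrow> a s \<le> b s + c"
  shows "ln ((1/F) * (\<Sum>s\<in>S. exp (N * a s))) / N \<le> ln ((1/F) * (\<Sum>s\<in>S. exp (N * b s))) / N + c"
proof -
  have pos_a: "0 < (\<Sum>s\<in>S. exp (N * a s))" and pos_b: "0 < (\<Sum>s\<in>S. exp (N * b s))"
    using S by (auto intro: sum_pos)
  have "(\<Sum>s\<in>S. exp (N * a s)) \<le> (\<Sum>s\<in>S. exp (N * c) * exp (N * b s))"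
  proof (rule sum_mono)
    fix s assume "s \<in> S"
    then have "N * a s \<le> N * c + N * b s"
      using ab[of s] N by (simp add: distrib_left[symmetric] mult_left_mono)
    then show "exp (N * a s) \<le> exp (N * c) * exp (N * b s)" by (simp add: exp_add[symmetric])
  qed
  then have "ln ((1/F) * (\<Sum>s\<in>S. exp (N * a s))) \<le> ln (exp (N * c) * ((1/F) * (\<Sum>s\<in>S. exp (N * b s))))"
    using pos_a F by (intro ln_mono) (auto simp: sum_distrib_left[symmetric] intro!: divide_right_mono)
  also have "\<dots> = N * c + ln ((1/F) * (\<Sum>s\<in>S. exp (N * b s)))"
    using pos_b F by (subst ln_mult) auto
  finally show ?thesis using N by (simp add: field_simps)
qed

lemma continuous_on_compact_affine_modulus:
  fixes h :: "'a::metric_space \<Rightarrow> real"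
  assumes S: "compact S" and h: "continuous_on S h" and e: "e > 0"
  obtains C where "C \<ge> 0" "\<And>p q. p \<in> S \<Longrightarrow> q \<in> S \<Longrightarrow> \<bar>h p - h q\<bar> \<le> e + C * dist p q"
proof -
  obtain d where d: "d > 0" "\<And>x x'. x \<in> S \<Longrightarrow> x' \<in> S \<Longrightarrow> dist x' x < d \<Longrightarrow> dist (h x') (h x) < e"
    using compact_uniformly_continuous[OF h S] e unfolding uniformly_continuous_on_def by metis
  obtain B where B: "B > 0" "\<And>x. x \<in> h ` S \<Longrightarrow> norm x \<le> B"
    using compact_imp_bounded[OF compact_continuous_image[OF h S]] bounded_pos by metis
  show ?thesis
  proof (rule that)
    show "0 \<le> 2 * B / d" using B d by simp
    fix p q assume p: "p \<in> S" and q: "q \<in> S"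
    show "\<bar>h p - h q\<bar> \<le> e + 2 * B / d * dist p q"
    proof (cases "dist p q < d")
      case True
      then have "\<bar>h p - h q\<bar> < e" using d(2)[OF q p] by (simp add: dist_real_def)
      moreover have "0 \<le> 2 * B / d * dist p q" using B d by simp
      ultimately show ?thesis by linarith
    next
      case False
      have "\<bar>h p\<bar> \<le> B" "\<bar>h q\<bar> \<le> B" using B(2) p q by auto
      then have "\<bar>h p - h q\<bar> \<le> 2 * B" using abs_triangle_ineq4[of "h p" "h q"] by linarith
      moreover have "2 * B \<le> 2 * B / d * dist p q" using False d B by (simp add: field_simps)
      ultimately show ?thesis using e by linarith
    qed
  qed
qed

lemma (in prob_space) abs_integral_diff_le:
  fixes f g :: "'a \<Rightarrow> real"
  assumes f: "integrable M f" and g: "integrable M g" and fg: "\<And>x. x \<in> space M \<Longrightarrow> \<bar>f x - g x\<bar> \<le> w"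
  shows "\<bar>integral\<^sup>L M f - integral\<^sup>L M g\<bar> \<le> w"
proof -
  have "(\<integral>x. f x - g x \<partial>M) \<le> w" "(\<integral>x. g x - f x \<partial>M) \<le> w"
    by (rule integral_le_const; use f g fg in \<open>auto simp: abs_le_iff\<close>)+
  moreover have "(\<integral>x. f x - g x \<partial>M) = integral\<^sup>L M f - integral\<^sup>L M g"
    and "(\<integral>x. g x - f x \<partial>M) = integral\<^sup>L M g - integral\<^sup>L M f"
    using f g by (simp_all add: Bochner_Integration.integral_diff)
  ultimately show ?thesis by (simp add: abs_le_iff)
qed

lemma tendsto_of_uniform_approximation:
  fixes u :: "nat \<Rightarrow> real"
  assumes "\<And>e. e > 0 \<Longrightarrow> \<exists>v b. v \<longlonglongrightarrow> b \<and> (\<forall>N. \<bar>u N - v N\<bar> \<le> e) \<and> \<bar>a - b\<bar> \<le> e"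
  shows "u \<longlonglongrightarrow> a"
proof (rule tendstoI)
  fix e :: real assume "e > 0"
  then obtain v b where v: "v \<longlonglongrightarrow> b" "\<And>N. \<bar>u N - v N\<bar> \<le> e/3" "\<bar>a - b\<bar> \<le> e/3"
    using assms[of "e/3"] by auto
  have "e/3 > 0" using \<open>e > 0\<close> by simp
  then have "eventually (\<lambda>N. dist (v N) b < e/3) sequentially" by (rule tendstoD[OF v(1)])
  then show "eventually (\<lambda>N. dist (u N) a < e) sequentially"
  proof (rule eventually_mono)
    fix N assume "dist (v N) b < e/3"
    then show "dist (u N) a < e"
      using v(2)[of N] v(3) unfolding dist_real_def abs_le_iff abs_less_iff by linarith
  qed
qed

lemma abs_kappa_diff_le:
  assumes "\<And>j. j < N \<Longrightarrow> \<bar>u j - v j\<bar> \<le> e" "e \<ge> 0"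
  shows "\<bar>kappa N u - kappa N v\<bar> \<le> e"
proof (cases "N = 0")
  case True then show ?thesis using assms by (simp add: kappa_def)
next
  case False
  have "\<bar>(\<Sum>j<N. u j) - (\<Sum>j<N. v j)\<bar> \<le> (\<Sum>j<N. \<bar>u j - v j\<bar>)"
    by (simp add: sum_subtractf[symmetric] sum_abs)
  also have "\<dots> \<le> N * e" using sum_bounded_above[of "{..<N}" "\<lambda>j. \<bar>u j - v j\<bar>" e] assms by simp
  finally show ?thesis using False unfolding kappa_def
    by (simp add: diff_divide_distrib[symmetric] abs_divide pos_divide_le_eq mult.commute)
qed

lemma kappa_linear_combination:
  "kappa N (\<lambda>j. \<Sum>k\<in>K. c k * u k j) = (\<Sum>k\<in>K. c k * kappa N (u k))"
  unfolding kappa_def by (simp add: sum_divide_distrib sum_distrib_left sum.swap[of _ "{..<N}"] algebra_simps)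

section \<open>Measures on the cube\<close>

lemma cube_eq_cbox: "cube R = cbox (\<chi> i. -R) (\<chi> i. R :: real^'n)"
  unfolding cube_def by (auto simp: mem_box_cart)

lemma compact_cube: "compact (cube R)"
  unfolding cube_eq_cbox by simp

lemma continuous_on_cube_coordinate:
  assumes "continuous_on {-R..R} f"
  shows "continuous_on (cube R) (\<lambda>x::real^'n. f (x$i))"
  by (rule continuous_on_compose2[OF assms]) (auto simp: cube_def intro: continuous_intros)

lemma ProbCube_prob_space: "\<mu> \<in> ProbCube R \<Longrightarrow> prob_space \<mu>"
  by (simp add: ProbCube_def)

lemma ProbCube_space: "\<mu> \<in> ProbCube R \<Longrightarrow> space \<mu> = cube R"
  by (simp add: ProbCube_def)

lemma ProbCube_borel_measurable_continuous:
  assumes "\<mu> \<in> ProbCube R" "continuous_on (cube R) g"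
  shows "g \<in> borel_measurable \<mu>"
proof -
  have "sets \<mu> = sets (restrict_space borel (cube R))" using assms(1) by (simp add: ProbCube_def)
  then show ?thesis
    using borel_measurable_continuous_on_restrict[OF assms(2)] measurable_cong_sets by blast
qed

lemma ProbCube_integrable_continuous:
  fixes g :: "real^'n \<Rightarrow> real"
  assumes \<mu>: "\<mu> \<in> ProbCube R" and g: "continuous_on (cube R) g"
  shows "integrable \<mu> g"
proof -
  interpret prob_space \<mu> using \<mu> by (rule ProbCube_prob_space)
  obtain B where "\<And>x. x \<in> g ` cube R \<Longrightarrow> norm x \<le> B"
    using compact_imp_bounded[OF compact_continuous_image[OF g compact_cube]] bounded_pos by metis
  then show ?thesis
    using ProbCube_space[OF \<mu>] ProbCube_borel_measurable_continuous[OF \<mu> g]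
    by (intro integrable_const_bound[where B=B]) auto
qed

lemma ProbCube_integrable_coordinate_le:
  fixes \<mu> :: "(real^'n) measure"
  assumes \<mu>: "\<mu> \<in> ProbCube R"
  shows "integrable \<mu> (\<lambda>x. of_bool (x$i \<le> t) :: real)"
proof -
  interpret prob_space \<mu> using \<mu> by (rule ProbCube_prob_space)
  have "(\<lambda>x::real^'n. x$i) \<in> borel_measurable \<mu>"
    by (rule ProbCube_borel_measurable_continuous[OF \<mu>]) (intro continuous_intros)
  then have "(\<lambda>x. indicator {..t} (x$i) :: real) \<in> borel_measurable \<mu>"
    by (rule measurable_compose) simp
  then show ?thesis
    by (intro integrable_const_bound[where B=1]) (auto simp: indicator_def)
qed

lemma integral_marginal:
  fixes \<mu> :: "(real^'n) measure" and g :: "real \<Rightarrow> real"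
  assumes \<mu>: "\<mu> \<in> ProbCube R" and g: "g \<in> borel_measurable borel"
  shows "integral\<^sup>L (marginal i \<mu>) g = (\<integral>x. g (x$i) \<partial>\<mu>)"
proof -
  have "(\<lambda>x::real^'n. x$i) \<in> borel_measurable \<mu>"
    by (rule ProbCube_borel_measurable_continuous[OF \<mu>]) (intro continuous_intros)
  then show ?thesis unfolding marginal_def using g by (subst integral_distr) auto
qed

section \<open>Continuity of the pressure term in the \<open>\<ell>\<^sup>1\<close> distance\<close>

lemma finite_perm_tuples: "finite (perm_tuples N :: ('n::finite \<Rightarrow> nat \<Rightarrow> nat) set)"
  by (intro finite_PiE) (auto simp: finite_permutations)

lemma perm_tuples_nonempty: "perm_tuples N \<noteq> {}"
  by (auto simp: PiE_eq_empty_iff intro: permutes_id)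

lemma perm_config_in_cube:
  assumes \<sigma>: "\<sigma> \<in> perm_tuples N" and X: "\<And>i j. j < N \<Longrightarrow> X i j \<in> {-R..R}" and j: "j < N"
  shows "(\<chi> i. perm_act (\<sigma> i) (X i) j) \<in> cube R"
proof -
  have "inv (\<sigma> i) permutes {..<N}" for i using \<sigma> by (auto intro: permutes_inv)
  then have "inv (\<sigma> i) j < N" for i using j permutes_in_image by fastforce
  then show ?thesis using X unfolding cube_def perm_act_def by auto
qed

lemma kappa_perm_config_le:
  fixes h :: "real^'n \<Rightarrow> real" and X Y :: "'n \<Rightarrow> nat \<Rightarrow> real"
  assumes C: "C \<ge> 0" "\<And>p q. p \<in> cube R \<Longrightarrow> q \<in> cube R \<Longrightarrow> \<bar>h p - h q\<bar> \<le> e + C * dist p q"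
    and \<sigma>: "\<sigma> \<in> perm_tuples N" and N: "N > 0"
    and X: "\<And>i j. j < N \<Longrightarrow> X i j \<in> {-R..R}" and Y: "\<And>i j. j < N \<Longrightarrow> Y i j \<in> {-R..R}"
  shows "kappa N (\<lambda>j. h (\<chi> i. perm_act (\<sigma> i) (X i) j))
      \<le> kappa N (\<lambda>j. h (\<chi> i. perm_act (\<sigma> i) (Y i) j)) + e + C * (\<Sum>i\<in>UNIV. (\<Sum>j<N. \<bar>X i j - Y i j\<bar>) / N)"
proof -
  define p where "p j = (\<chi> i. perm_act (\<sigma> i) (X i) j)" for j
  define q where "q j = (\<chi> i. perm_act (\<sigma> i) (Y i) j)" for j
  define \<delta> where "\<delta> j = (\<Sum>i\<in>UNIV. \<bar>X i (inv (\<sigma> i) j) - Y i (inv (\<sigma> i) j)\<bar>)" for j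
  have perm: "inv (\<sigma> i) permutes {..<N}" for i using \<sigma> by (auto intro: permutes_inv)
  have "(\<Sum>j<N. h (p j)) - (\<Sum>j<N. h (q j)) \<le> (\<Sum>j<N. \<bar>h (p j) - h (q j)\<bar>)"
    by (simp add: sum_subtractf[symmetric] sum_mono)
  also have "\<dots> \<le> (\<Sum>j<N. e + C * \<delta> j)"
  proof (rule sum_mono)
    fix j assume "j \<in> {..<N}"
    then have "p j \<in> cube R" "q j \<in> cube R"
      unfolding p_def q_def using perm_config_in_cube[OF \<sigma> X] perm_config_in_cube[OF \<sigma> Y] by auto
    then have "\<bar>h (p j) - h (q j)\<bar> \<le> e + C * dist (p j) (q j)" by (rule C(2))
    moreover have "dist (p j) (q j) \<le> \<delta> j"
      using norm_le_l1_cart[of "p j - q j"] by (simp add: dist_norm p_def q_def \<delta>_def perm_act_def)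
    ultimately show "\<bar>h (p j) - h (q j)\<bar> \<le> e + C * \<delta> j"
      using mult_left_mono[OF _ C(1)] by fastforce
  qed
  also have "(\<Sum>j<N. \<bar>X i (inv (\<sigma> i) j) - Y i (inv (\<sigma> i) j)\<bar>) = (\<Sum>j<N. \<bar>X i j - Y i j\<bar>)" for i
    using sum.permute[OF perm[of i], of "\<lambda>j. \<bar>X i j - Y i j\<bar>"] by (simp add: o_def)
  then have "(\<Sum>j<N. \<delta> j) = (\<Sum>i\<in>UNIV. \<Sum>j<N. \<bar>X i j - Y i j\<bar>)"
    unfolding \<delta>_def by (subst sum.swap) simp
  then have "(\<Sum>j<N. e + C * \<delta> j) = N * e + C * (\<Sum>i\<in>UNIV. \<Sum>j<N. \<bar>X i j - Y i j\<bar>)"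
    by (simp add: sum.distrib sum_distrib_left[symmetric])
  finally have diff: "(\<Sum>j<N. h (p j)) - (\<Sum>j<N. h (q j)) \<le> N * e + C * (\<Sum>i\<in>UNIV. \<Sum>j<N. \<bar>X i j - Y i j\<bar>)" .
  have "kappa N (\<lambda>j. h (p j)) - kappa N (\<lambda>j. h (q j)) = ((\<Sum>j<N. h (p j)) - (\<Sum>j<N. h (q j))) / N"
    unfolding kappa_def by (simp add: diff_divide_distrib)
  also have "\<dots> \<le> (N * e + C * (\<Sum>i\<in>UNIV. \<Sum>j<N. \<bar>X i j - Y i j\<bar>)) / N"
    using diff by (rule divide_right_mono) simp
  also have "\<dots> = e + C * ((\<Sum>i\<in>UNIV. \<Sum>j<N. \<bar>X i j - Y i j\<bar>) / N)"
    using N by (simp add: field_simps)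
  also have "(\<Sum>i\<in>UNIV. \<Sum>j<N. \<bar>X i j - Y i j\<bar>) / N = (\<Sum>i\<in>UNIV. (\<Sum>j<N. \<bar>X i j - Y i j\<bar>) / N)"
    by (rule sum_divide_distrib)
  finally show ?thesis unfolding p_def q_def by linarith
qed

lemma pressure_term_le_of_l1_close:
  fixes h :: "real^'n \<Rightarrow> real"
  assumes h: "continuous_on (cube R) h" and e: "e > 0"
  obtains d where "d > 0"
    "\<And>X Y N. N > 0 \<Longrightarrow> (\<And>i j. j < N \<Longrightarrow> X N i j \<in> {-R..R}) \<Longrightarrow> (\<And>i j. j < N \<Longrightarrow> Y N i j \<in> {-R..R})
      \<Longrightarrow> (\<And>i. (\<Sum>j<N. \<bar>X N i j - Y N i j\<bar>) / N \<le> d) \<Longrightarrow> pressure_term h X N \<le> pressure_term h Y N + e"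
proof -
  obtain C where C: "C \<ge> 0" "\<And>p q. p \<in> cube R \<Longrightarrow> q \<in> cube R \<Longrightarrow> \<bar>h p - h q\<bar> \<le> e/2 + C * dist p q"
    using continuous_on_compact_affine_modulus[OF compact_cube h, of "e/2"] e by auto
  define d where "d = e / (2 * (C * CARD('n) + 1))"
  have K: "C * CARD('n) \<ge> 0" using C(1) by simp
  then have d: "d > 0" using e by (simp add: d_def)
  have "C * (CARD('n) * d) \<le> (C * CARD('n) + 1) * d" using d by (simp add: algebra_simps)
  also have "\<dots> = e/2" using K by (simp add: d_def field_simps)
  finally have Cd: "C * (CARD('n) * d) \<le> e/2" .
  show ?thesis
  proof (rule that[OF d])
    fix X Y :: "nat \<Rightarrow> 'n \<Rightarrow> nat \<Rightarrow> real" and N :: nat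
    assume N: "N > 0" and X: "\<And>i j. j < N \<Longrightarrow> X N i j \<in> {-R..R}"
      and Y: "\<And>i j. j < N \<Longrightarrow> Y N i j \<in> {-R..R}"
      and close: "\<And>i. (\<Sum>j<N. \<bar>X N i j - Y N i j\<bar>) / N \<le> d"
    have "C * (\<Sum>i\<in>UNIV. (\<Sum>j<N. \<bar>X N i j - Y N i j\<bar>) / N) \<le> C * (CARD('n) * d)"
      using close sum_bounded_above[of UNIV "\<lambda>i. (\<Sum>j<N. \<bar>X N i j - Y N i j\<bar>) / N" d]
      by (intro mult_left_mono C(1)) auto
    then have cmp: "kappa N (\<lambda>j. h (\<chi> i. perm_act (\<sigma> i) (X N i) j))
        \<le> kappa N (\<lambda>j. h (\<chi> i. perm_act (\<sigma> i) (Y N i) j)) + e" if "\<sigma> \<in> perm_tuples N" for \<sigma>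
      using kappa_perm_config_le[where X="X N" and Y="Y N", OF C that N X Y] Cd by linarith
    show "pressure_term h X N \<le> pressure_term h Y N + e"
      unfolding pressure_term_def
      by (rule ln_mean_exp_le_shift[OF finite_perm_tuples perm_tuples_nonempty]) (use N cmp in auto)
  qed
qed

section \<open>Nondecreasing vectors and ramp averages\<close>

definition grid_point :: "real \<Rightarrow> nat \<Rightarrow> nat \<Rightarrow> real" where
  "grid_point R M l = -R + real l * (2*R/real M)"

definition grid_ramp :: "real \<Rightarrow> nat \<Rightarrow> nat \<Rightarrow> real \<Rightarrow> real" where
  "grid_ramp R M l s = min 1 (max 0 ((grid_point R M (Suc l) - s) / (2*R/real M)))"

lemma grid_point_le_iff: "R > 0 \<Longrightarrow> M > 0 \<Longrightarrow> grid_point R M a \<le> grid_point R M b \<longleftrightarrow> a \<le> b"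
  unfolding grid_point_def by (simp add: field_simps)

lemma grid_point_Suc: "grid_point R M (Suc l) = grid_point R M l + 2*R/M"
  unfolding grid_point_def by (simp add: ring_distribs add_divide_distrib add.commute)

lemma grid_point_range:
  assumes "R > 0" "M > 0" "a \<le> M"
  shows "grid_point R M a \<in> {-R..R}"
proof -
  have "real a * (2*R/M) \<le> M * (2*R/M)" using assms by (intro mult_right_mono) auto
  also have "M * (2*R/M) = 2*R" using assms by simp
  finally show ?thesis unfolding grid_point_def using assms by auto
qed

lemma continuous_on_grid_ramp: "continuous_on A (grid_ramp R M l)"
proof -
  have "grid_ramp R M l = (\<lambda>s. min 1 (max 0 ((grid_point R M (Suc l) - s) * inverse (2*R/real M))))"
    by (rule ext) (unfold grid_ramp_def divide_inverse, rule refl)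
  then show ?thesis by (simp only:) (intro continuous_intros)
qed

lemma grid_ramp_bounds:
  assumes R: "R > 0" and M: "M > 0"
  shows "of_bool (s \<le> grid_point R M l) \<le> grid_ramp R M l s"
    and "grid_ramp R M l s \<le> of_bool (s \<le> grid_point R M (Suc l))"
proof -
  define \<eta> where "\<eta> = 2*R/M"
  have \<eta>: "\<eta> > 0" using R M by (simp add: \<eta>_def)
  have ramp: "grid_ramp R M l s = min 1 (max 0 ((grid_point R M (Suc l) - s) / \<eta>))"
    by (simp add: grid_ramp_def \<eta>_def)
  show "of_bool (s \<le> grid_point R M l) \<le> grid_ramp R M l s"
  proof (cases "s \<le> grid_point R M l")
    case True
    then have "1 \<le> (grid_point R M (Suc l) - s) / \<eta>"
      using \<eta> by (simp add: grid_point_Suc \<eta>_def[symmetric] le_divide_eq)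
    then show ?thesis using True by (simp add: ramp)
  qed (simp add: ramp)
  show "grid_ramp R M l s \<le> of_bool (s \<le> grid_point R M (Suc l))"
  proof (cases "s \<le> grid_point R M (Suc l)")
    case False
    then have "(grid_point R M (Suc l) - s) / \<eta> \<le> 0" using \<eta> by (simp add: divide_nonpos_pos)
    then show ?thesis using False by (simp add: ramp)
  qed (simp add: ramp)
qed

text \<open>For nondecreasing vectors the index sets \<open>{j. x j \<le> t}\<close> and \<open>{j. y j \<le> t}\<close> are initial
  segments, so one contains the other.\<close>
lemma sum_abs_of_bool_diff_sorted:
  fixes x y :: "nat \<Rightarrow> real"
  assumes x: "\<And>j k. j \<le> k \<Longrightarrow> k < N \<Longrightarrow> x j \<le> x k"
      and y: "\<And>j k. j \<le> k \<Longrightarrow> k < N \<Longrightarrow> y j \<le> y k"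
  shows "(\<Sum>j<N. \<bar>of_bool (x j \<le> t) - of_bool (y j \<le> t)\<bar> :: real)
       = \<bar>(\<Sum>j<N. of_bool (x j \<le> t)) - (\<Sum>j<N. of_bool (y j \<le> t))\<bar>"
proof -
  have "(\<forall>j<N. y j \<le> t \<longrightarrow> x j \<le> t) \<or> (\<forall>j<N. x j \<le> t \<longrightarrow> y j \<le> t)"
  proof (rule ccontr)
    assume "\<not> ?thesis"
    then obtain j k where j: "j < N" "x j > t" "y j \<le> t" and k: "k < N" "x k \<le> t" "y k > t"
      by (auto simp: not_le)
    show False
    proof (cases "j \<le> k")
      case True then show False using x[OF True k(1)] j k by linarith
    next
      case False then show False using y[of k j] j k by linarith
    qed
  qed
  then show ?thesis
  proof
    assume yx: "\<forall>j<N. y j \<le> t \<longrightarrow> x j \<le> t"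
    have "(\<Sum>j<N. \<bar>of_bool (x j \<le> t) - of_bool (y j \<le> t)\<bar> :: real)
        = (\<Sum>j<N. of_bool (x j \<le> t) - of_bool (y j \<le> t))"
      by (rule sum.cong) (use yx in auto)
    moreover have "(\<Sum>j<N. of_bool (y j \<le> t) :: real) \<le> (\<Sum>j<N. of_bool (x j \<le> t))"
      by (rule sum_mono) (use yx in auto)
    ultimately show ?thesis by (simp add: sum_subtractf del: sum_of_bool_eq)
  next
    assume xy: "\<forall>j<N. x j \<le> t \<longrightarrow> y j \<le> t"
    have "(\<Sum>j<N. \<bar>of_bool (x j \<le> t) - of_bool (y j \<le> t)\<bar> :: real)
        = (\<Sum>j<N. of_bool (y j \<le> t) - of_bool (x j \<le> t))"
      by (rule sum.cong) (use xy in auto)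
    moreover have "(\<Sum>j<N. of_bool (x j \<le> t) :: real) \<le> (\<Sum>j<N. of_bool (y j \<le> t))"
      by (rule sum_mono) (use xy in auto)
    ultimately show ?thesis by (simp add: sum_subtractf del: sum_of_bool_eq)
  qed
qed

text \<open>Every grid point in \<open>[b, a)\<close> separates \<open>a\<close> from \<open>b\<close>.\<close>
lemma diff_le_grid_crossings:
  fixes a b R :: real
  assumes R: "R > 0" and M: "M > 0" and ab: "-R \<le> b" "b \<le> a" "a \<le> R"
  shows "a - b \<le> 2*R/M + 2*R/M * (\<Sum>l<M. \<bar>of_bool (a \<le> grid_point R M l) - of_bool (b \<le> grid_point R M l)\<bar>)"
proof -
  define \<eta> where "\<eta> = 2*R/M"
  have \<eta>: "\<eta> > 0" using R M by (simp add: \<eta>_def)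
  define lo where "lo = \<lceil>(b+R)/\<eta>\<rceil>"
  define hi where "hi = \<lceil>(a+R)/\<eta>\<rceil>"
  have "(b+R)/\<eta> \<ge> 0" using ab \<eta> by simp
  then have lo0: "lo \<ge> 0" unfolding lo_def by simp
  have lohi: "lo \<le> hi" unfolding lo_def hi_def using ab \<eta> by (intro ceiling_mono divide_right_mono) auto
  have "(a+R)/\<eta> \<le> 2*R/\<eta>" using ab \<eta> by (intro divide_right_mono) auto
  also have "2*R/\<eta> = M" using M R by (simp add: \<eta>_def)
  finally have hiM: "hi \<le> M" unfolding hi_def by (simp add: ceiling_le_iff)
  have grid: "grid_point R M l = -R + l * \<eta>" for l unfolding grid_point_def \<eta>_def by simp
  have cross: "\<bar>of_bool (a \<le> grid_point R M l) - of_bool (b \<le> grid_point R M l)\<bar> = (1::real)"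
    if l: "l \<in> {nat lo..<nat hi}" for l
  proof -
    have "int l \<ge> lo" "int l < hi" using l lo0 by auto
    then have "(b+R)/\<eta> \<le> l" "l < (a+R)/\<eta>" unfolding lo_def hi_def
      by (simp_all add: ceiling_le_iff less_ceiling_iff)
    then have "b + R \<le> l * \<eta>" "l * \<eta> < a + R" using \<eta> by (simp_all add: field_simps)
    then show ?thesis unfolding grid by auto
  qed
  have "real_of_int (hi - lo) = (\<Sum>l\<in>{nat lo..<nat hi}. \<bar>of_bool (a \<le> grid_point R M l) - of_bool (b \<le> grid_point R M l)\<bar>)"
    using cross lo0 lohi by (simp add: of_nat_diff)
  also have "\<dots> \<le> (\<Sum>l<M. \<bar>of_bool (a \<le> grid_point R M l) - of_bool (b \<le> grid_point R M l)\<bar>)"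
    using hiM by (intro sum_mono2) auto
  finally have count: "real_of_int (hi - lo) \<le> (\<Sum>l<M. \<bar>of_bool (a \<le> grid_point R M l) - of_bool (b \<le> grid_point R M l)\<bar>)" .
  have "(a+R)/\<eta> \<le> hi" "lo < (b+R)/\<eta> + 1" unfolding hi_def lo_def by linarith+
  moreover have "(a-b)/\<eta> = (a+R)/\<eta> - (b+R)/\<eta>" by (simp add: diff_divide_distrib[symmetric])
  ultimately have "a - b \<le> \<eta> * (1 + real_of_int (hi - lo))" using \<eta> by (simp add: field_simps)
  also have "\<dots> \<le> \<eta> * (1 + (\<Sum>l<M. \<bar>of_bool (a \<le> grid_point R M l) - of_bool (b \<le> grid_point R M l)\<bar>))"
    using count \<eta> by (intro mult_left_mono) auto
  finally show ?thesis by (simp add: \<eta>_def algebra_simps)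
qed

lemma abs_diff_le_grid_crossings:
  fixes a b R :: real
  assumes R: "R > 0" and M: "M > 0" and ab: "a \<in> {-R..R}" "b \<in> {-R..R}"
  shows "\<bar>a - b\<bar> \<le> 2*R/M + 2*R/M * (\<Sum>l<M. \<bar>of_bool (a \<le> grid_point R M l) - of_bool (b \<le> grid_point R M l)\<bar>)"
proof (cases "b \<le> a")
  case True then show ?thesis using diff_le_grid_crossings[OF R M, of b a] ab by simp
next
  case False
  then show ?thesis using diff_le_grid_crossings[OF R M, of a b] ab by (simp add: abs_minus_commute)
qed

text \<open>Up to the mesh, the distance is controlled by how many coordinates of each vector lie below
  the grid points; these counts are squeezed between sums of the continuous ramps.\<close>
lemma sorted_l1_dist_le_ramp_averages:
  fixes x y :: "nat \<Rightarrow> real"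
  assumes R: "R > 0" and M: "M > 0" and N: "N > 0"
    and x: "\<And>j. j < N \<Longrightarrow> x j \<in> {-R..R}" "\<And>j k. j \<le> k \<Longrightarrow> k < N \<Longrightarrow> x j \<le> x k"
    and y: "\<And>j. j < N \<Longrightarrow> y j \<in> {-R..R}" "\<And>j k. j \<le> k \<Longrightarrow> k < N \<Longrightarrow> y j \<le> y k"
  shows "(\<Sum>j<N. \<bar>x j - y j\<bar>) / N \<le> 3 * (2*R/M) + 2*R/M *
           (\<Sum>l<M. \<bar>kappa N (\<lambda>j. grid_ramp R M l (x j)) - kappa N (\<lambda>j. grid_ramp R M l (y j))\<bar>)"
proof -
  define \<eta> where "\<eta> = 2*R/M"
  have \<eta>: "\<eta> > 0" using R M by (simp add: \<eta>_def)
  define cx where "cx l = (\<Sum>j<N. of_bool (x j \<le> grid_point R M l) :: real)" for l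
  define cy where "cy l = (\<Sum>j<N. of_bool (y j \<le> grid_point R M l) :: real)" for l
  define rx where "rx l = (\<Sum>j<N. grid_ramp R M l (x j))" for l
  define ry where "ry l = (\<Sum>j<N. grid_ramp R M l (y j))" for l
  have "(\<Sum>j<N. \<bar>x j - y j\<bar>)
      \<le> (\<Sum>j<N. \<eta> + \<eta> * (\<Sum>l<M. \<bar>of_bool (x j \<le> grid_point R M l) - of_bool (y j \<le> grid_point R M l)\<bar>))"
    unfolding \<eta>_def using x y by (intro sum_mono abs_diff_le_grid_crossings[OF R M]) auto
  also have "\<dots> = N * \<eta> + \<eta> * (\<Sum>l<M. \<Sum>j<N. \<bar>of_bool (x j \<le> grid_point R M l) - of_bool (y j \<le> grid_point R M l)\<bar>)"
    by (simp add: sum.distrib sum_distrib_left[symmetric] sum.swap[of _ "{..<N}" "{..<M}"])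
  also have "(\<Sum>l<M. \<Sum>j<N. \<bar>of_bool (x j \<le> grid_point R M l) - of_bool (y j \<le> grid_point R M l)\<bar>) = (\<Sum>l<M. \<bar>cx l - cy l\<bar>)"
    unfolding cx_def cy_def by (intro sum.cong refl sum_abs_of_bool_diff_sorted x y) auto
  also have "(\<Sum>l<M. \<bar>cx l - cy l\<bar>) \<le> (\<Sum>l<M. \<bar>rx l - ry l\<bar> + (cx (Suc l) - cx l) + (cy (Suc l) - cy l))"
  proof (rule sum_mono)
    fix l
    have "cx l \<le> rx l" "rx l \<le> cx (Suc l)" "cy l \<le> ry l" "ry l \<le> cy (Suc l)"
      unfolding cx_def rx_def cy_def ry_def
      by (auto intro!: sum_mono simp: grid_ramp_bounds[OF R M] simp del: sum_of_bool_eq)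
    then show "\<bar>cx l - cy l\<bar> \<le> \<bar>rx l - ry l\<bar> + (cx (Suc l) - cx l) + (cy (Suc l) - cy l)" by linarith
  qed
  also have "\<dots> = (\<Sum>l<M. \<bar>rx l - ry l\<bar>) + (cx M - cx 0) + (cy M - cy 0)"
    by (simp add: sum.distrib sum_lessThan_telescope)
  also have "\<dots> \<le> (\<Sum>l<M. \<bar>rx l - ry l\<bar>) + N + N"
  proof -
    have "cx M \<le> N" "cy M \<le> N"
      using sum_bounded_above[of "{..<N}" "\<lambda>j. of_bool (x j \<le> grid_point R M M)" 1, OF of_bool_less_eq_one]
        sum_bounded_above[of "{..<N}" "\<lambda>j. of_bool (y j \<le> grid_point R M M)" 1, OF of_bool_less_eq_one]
      unfolding cx_def cy_def by (simp_all del: sum_of_bool_eq)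
    moreover have "cx 0 \<ge> 0" "cy 0 \<ge> 0" unfolding cx_def cy_def by (simp_all add: sum_nonneg del: sum_of_bool_eq)
    ultimately show ?thesis by simp
  qed
  also have "(\<Sum>l<M. \<bar>rx l - ry l\<bar>)
      = N * (\<Sum>l<M. \<bar>kappa N (\<lambda>j. grid_ramp R M l (x j)) - kappa N (\<lambda>j. grid_ramp R M l (y j))\<bar>)"
    unfolding rx_def ry_def kappa_def sum_distrib_left using N
    by (intro sum.cong refl) (simp add: diff_divide_distrib[symmetric] abs_divide)
  finally show ?thesis using N \<eta> unfolding \<eta>_def[symmetric]
    by (simp add: pos_divide_le_eq algebra_simps)
qed

section \<open>Approximating sequences\<close>

lemma approx_seq_range: "approx_seq R m \<Xi> \<Longrightarrow> j < N \<Longrightarrow> \<Xi> N i j \<in> {-R..R}"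
  unfolding approx_seq_def by auto

lemma approx_seq_sorted: "approx_seq R m \<Xi> \<Longrightarrow> j \<le> k \<Longrightarrow> k < N \<Longrightarrow> \<Xi> N i j \<le> \<Xi> N i k"
  unfolding approx_seq_def by blast

text \<open>Weierstrass approximation reduces continuous functions to the moments.\<close>
lemma approx_seq_kappa_tendsto:
  fixes \<mu> :: "(real^'n) measure"
  assumes \<mu>: "\<mu> \<in> ProbCube R" and \<Xi>: "approx_seq R (marginals \<mu>) \<Xi>" and f: "continuous_on {-R..R} f"
  shows "(\<lambda>N. kappa N (\<lambda>j. f (\<Xi> N i j))) \<longlonglongrightarrow> (\<integral>x. f (x$i) \<partial>\<mu>)"
proof (rule tendsto_of_uniform_approximation)
  interpret prob_space \<mu> using \<mu> by (rule ProbCube_prob_space)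
  fix e :: real assume "e > 0"
  then obtain g where "real_polynomial_function g" and fg: "\<And>x. x \<in> {-R..R} \<Longrightarrow> \<bar>f x - g x\<bar> < e"
    using Stone_Weierstrass_real_polynomial_function[OF compact_Icc f] by blast
  then obtain c n where g: "g = (\<lambda>x. \<Sum>k\<le>n. c k * x^k)" using real_polynomial_function_iff_sum by metis
  have moments: "(\<lambda>N. kappa N (\<lambda>j. (\<Xi> N i j)^k)) \<longlonglongrightarrow> (\<integral>x. (x$i)^k \<partial>\<mu>)" for k
  proof -
    have "(\<lambda>N. kappa N (\<lambda>j. (\<Xi> N i j)^k)) \<longlonglongrightarrow> integral\<^sup>L (marginal i \<mu>) (\<lambda>x. x^k)"
      using \<Xi> unfolding approx_seq_def by blast
    then show ?thesis using integral_marginal[OF \<mu>, of "\<lambda>x. x^k"] by simp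
  qed
  have "integrable \<mu> (\<lambda>x. (x$i)^k)" for k
    by (rule ProbCube_integrable_continuous[OF \<mu>]) (intro continuous_intros)
  then have "(\<integral>x. g (x$i) \<partial>\<mu>) = (\<Sum>k\<le>n. c k * (\<integral>x. (x$i)^k \<partial>\<mu>))"
    unfolding g by (simp add: integral_sum integral_mult_right)
  moreover have "(\<lambda>N. kappa N (\<lambda>j. g (\<Xi> N i j))) \<longlonglongrightarrow> (\<Sum>k\<le>n. c k * (\<integral>x. (x$i)^k \<partial>\<mu>))"
    unfolding g kappa_linear_combination by (intro tendsto_intros moments)
  moreover have "\<bar>kappa N (\<lambda>j. f (\<Xi> N i j)) - kappa N (\<lambda>j. g (\<Xi> N i j))\<bar> \<le> e" for N
    using fg approx_seq_range[OF \<Xi>] \<open>e > 0\<close> by (intro abs_kappa_diff_le) (auto intro: less_imp_le)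
  moreover have "\<bar>(\<integral>x. f (x$i) \<partial>\<mu>) - (\<integral>x. g (x$i) \<partial>\<mu>)\<bar> \<le> e"
  proof (rule abs_integral_diff_le)
    have "continuous_on {-R..R} g" unfolding g by (intro continuous_intros)
    then show "integrable \<mu> (\<lambda>x. f (x$i))" "integrable \<mu> (\<lambda>x. g (x$i))"
      using f by (auto intro!: ProbCube_integrable_continuous[OF \<mu>] continuous_on_cube_coordinate)
    show "\<bar>f (x$i) - g (x$i)\<bar> \<le> e" if "x \<in> space \<mu>" for x
      using that fg[of "x$i"] ProbCube_space[OF \<mu>] by (auto simp: cube_def)
  qed
  ultimately show "\<exists>v b. v \<longlonglongrightarrow> b \<and> (\<forall>N. \<bar>kappa N (\<lambda>j. f (\<Xi> N i j)) - v N\<bar> \<le> e)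
      \<and> \<bar>(\<integral>x. f (x$i) \<partial>\<mu>) - b\<bar> \<le> e"
    by (intro exI[of _ "\<lambda>N. kappa N (\<lambda>j. g (\<Xi> N i j))"] exI[of _ "\<integral>x. g (x$i) \<partial>\<mu>"]) simp
qed

text \<open>By telescoping, \<open>step_approx R L f x = f s\<^sub>a\<close> for the least grid point \<open>s\<^sub>a \<ge> x\<close>; it is written
  through the indicators of \<open>x \<le> s\<^sub>l\<close>, so that its averages and integrals are linear in the
  numbers of points below the grid points.\<close>
definition step_approx :: "real \<Rightarrow> nat \<Rightarrow> (real \<Rightarrow> real) \<Rightarrow> real \<Rightarrow> real" where
  "step_approx R L f x = f (grid_point R L L)
     - (\<Sum>l<L. of_bool (x \<le> grid_point R L l) * (f (grid_point R L (Suc l)) - f (grid_point R L l)))"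

definition grid_cdf :: "(real^'n) measure \<Rightarrow> 'n \<Rightarrow> real \<Rightarrow> nat \<Rightarrow> nat \<Rightarrow> real" where
  "grid_cdf \<mu> i R L l = (\<integral>x. of_bool (x$i \<le> grid_point R L l) \<partial>\<mu>)"

definition grid_count :: "(real^'n) measure \<Rightarrow> 'n \<Rightarrow> real \<Rightarrow> nat \<Rightarrow> nat \<Rightarrow> nat \<Rightarrow> nat" where
  "grid_count \<mu> i R L N l = nat \<lfloor>real N * grid_cdf \<mu> i R L l\<rfloor>"

text \<open>The \<open>j\<close>-th coordinate is the grid point \<open>s\<^sub>l\<close> with \<open>l\<close> least such that \<open>j < grid_count l\<close>, so that
  exactly \<open>grid_count l\<close> coordinates lie at or below \<open>s\<^sub>l\<close>.\<close>
definition quantile_vector :: "(real^'n) measure \<Rightarrow> 'n \<Rightarrow> real \<Rightarrow> nat \<Rightarrow> nat \<Rightarrow> nat \<Rightarrow> real" where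
  "quantile_vector \<mu> i R L N j = grid_point R L (card {l. l < L \<and> grid_count \<mu> i R L N l \<le> j})"

text \<open>The mesh \<open>2R/L\<close> and the accumulated rounding error \<open>L/N\<close> both tend to zero.\<close>
definition grid_size :: "nat \<Rightarrow> nat" where
  "grid_size N = nat \<lfloor>sqrt (real N)\<rfloor> + 1"

definition quantile_seq :: "(real^'n) measure \<Rightarrow> real \<Rightarrow> nat \<Rightarrow> 'n \<Rightarrow> nat \<Rightarrow> real" where
  "quantile_seq \<mu> R N i j = quantile_vector \<mu> i R (grid_size N) N j"

lemma abs_step_approx_diff_le:
  assumes R: "R > 0" and L: "L > 0" and x: "x \<in> {-R..R}"
    and w: "\<And>x y. x \<in> {-R..R} \<Longrightarrow> y \<in> {-R..R} \<Longrightarrow> \<bar>x - y\<bar> \<le> 2*R/L \<Longrightarrow> \<bar>f x - f y\<bar> \<le> w"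
  shows "\<bar>step_approx R L f x - f x\<bar> \<le> w"
proof -
  define \<eta> where "\<eta> = 2*R/L"
  have \<eta>: "\<eta> > 0" using R L by (simp add: \<eta>_def)
  have grid: "grid_point R L l = -R + l * \<eta>" for l unfolding grid_point_def \<eta>_def by simp
  define a where "a = nat \<lceil>(x+R)/\<eta>\<rceil>"
  have nn: "(x+R)/\<eta> \<ge> 0" using x \<eta> by simp
  have "(x+R)/\<eta> \<le> 2*R/\<eta>" using x \<eta> by (intro divide_right_mono) auto
  also have "2*R/\<eta> = L" using L R by (simp add: \<eta>_def)
  finally have aL: "a \<le> L" unfolding a_def by (simp add: ceiling_le_iff nat_le_iff)
  have aup: "(x+R)/\<eta> \<le> a" and alo: "a < (x+R)/\<eta> + 1" unfolding a_def using nn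
    by (simp_all add: ceiling_correct) linarith
  have below_iff: "x \<le> grid_point R L l \<longleftrightarrow> a \<le> l" for l
  proof
    assume "x \<le> grid_point R L l"
    then have "(x+R)/\<eta> \<le> l" using \<eta> unfolding grid by (simp add: field_simps)
    then show "a \<le> l" unfolding a_def by (simp add: ceiling_le_iff nat_le_iff)
  next
    assume "a \<le> l"
    then have "(x+R)/\<eta> \<le> l" using aup by linarith
    then show "x \<le> grid_point R L l" using \<eta> unfolding grid by (simp add: field_simps)
  qed
  have "(\<Sum>l<L. of_bool (x \<le> grid_point R L l) * (f (grid_point R L (Suc l)) - f (grid_point R L l)))
      = (\<Sum>l\<in>{a..<L}. f (grid_point R L (Suc l)) - f (grid_point R L l))"
    by (rule sum.mono_neutral_cong_right) (auto simp: below_iff)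
  also have "\<dots> = f (grid_point R L L) - f (grid_point R L a)"
    by (rule sum_Suc_diff'[OF aL])
  finally have step: "step_approx R L f x = f (grid_point R L a)" unfolding step_approx_def by simp
  have "\<bar>grid_point R L a - x\<bar> \<le> 2*R/L"
  proof -
    have "x + R \<le> a * \<eta>" "a * \<eta> < x + R + \<eta>" using aup alo \<eta> by (simp_all add: field_simps)
    then show ?thesis unfolding grid \<eta>_def[symmetric] by auto
  qed
  then show ?thesis unfolding step using w x grid_point_range[OF R L aL] by auto
qed

lemma grid_cdf_bounds:
  fixes \<mu> :: "(real^'n) measure"
  assumes \<mu>: "\<mu> \<in> ProbCube R"
  shows "0 \<le> grid_cdf \<mu> i R L l" "grid_cdf \<mu> i R L l \<le> 1"
proof -
  interpret prob_space \<mu> using \<mu> by (rule ProbCube_prob_space)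
  show "0 \<le> grid_cdf \<mu> i R L l" unfolding grid_cdf_def by (rule Bochner_Integration.integral_nonneg) auto
  show "grid_cdf \<mu> i R L l \<le> 1" unfolding grid_cdf_def
    using ProbCube_integrable_coordinate_le[OF \<mu>] by (intro integral_le_const) auto
qed

lemma grid_cdf_mono:
  fixes \<mu> :: "(real^'n) measure"
  assumes \<mu>: "\<mu> \<in> ProbCube R" and R: "R > 0" and L: "L > 0" and "l \<le> l'"
  shows "grid_cdf \<mu> i R L l \<le> grid_cdf \<mu> i R L l'"
  unfolding grid_cdf_def using grid_point_le_iff[OF R L, of l l'] assms
  by (intro integral_mono ProbCube_integrable_coordinate_le[OF \<mu>]) auto

lemma grid_count_le:
  fixes \<mu> :: "(real^'n) measure"
  assumes \<mu>: "\<mu> \<in> ProbCube R"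
  shows "grid_count \<mu> i R L N l \<le> N"
proof -
  have "real N * grid_cdf \<mu> i R L l \<le> real N" using grid_cdf_bounds[OF \<mu>] by (simp add: mult_left_le)
  then have "nat \<lfloor>real N * grid_cdf \<mu> i R L l\<rfloor> \<le> nat \<lfloor>real N\<rfloor>" by (intro nat_mono floor_mono)
  then show ?thesis unfolding grid_count_def by simp
qed

lemma grid_count_mono:
  fixes \<mu> :: "(real^'n) measure"
  assumes "\<mu> \<in> ProbCube R" "R > 0" "L > 0" "l \<le> l'"
  shows "grid_count \<mu> i R L N l \<le> grid_count \<mu> i R L N l'"
  unfolding grid_count_def using grid_cdf_mono[OF assms] by (intro nat_mono floor_mono mult_left_mono) auto

lemma abs_grid_count_error:
  fixes \<mu> :: "(real^'n) measure"
  assumes \<mu>: "\<mu> \<in> ProbCube R"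
  shows "\<bar>real (grid_count \<mu> i R L N l) - real N * grid_cdf \<mu> i R L l\<bar> \<le> 1"
proof -
  have "0 \<le> real N * grid_cdf \<mu> i R L l" using grid_cdf_bounds(1)[OF \<mu>] by simp
  then have "real (grid_count \<mu> i R L N l) = real_of_int \<lfloor>real N * grid_cdf \<mu> i R L l\<rfloor>"
    unfolding grid_count_def by simp
  moreover have "real_of_int \<lfloor>real N * grid_cdf \<mu> i R L l\<rfloor> \<le> real N * grid_cdf \<mu> i R L l"
    "real N * grid_cdf \<mu> i R L l < real_of_int \<lfloor>real N * grid_cdf \<mu> i R L l\<rfloor> + 1"
    by linarith+
  ultimately show ?thesis by linarith
qed

lemma quantile_vector_le_grid_point_iff:
  fixes \<mu> :: "(real^'n) measure"
  assumes \<mu>: "\<mu> \<in> ProbCube R" and R: "R > 0" and L: "L > 0" and l: "l < L"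
  shows "quantile_vector \<mu> i R L N j \<le> grid_point R L l \<longleftrightarrow> j < grid_count \<mu> i R L N l"
proof -
  define S where "S = {l. l < L \<and> grid_count \<mu> i R L N l \<le> j}"
  note mono = grid_count_mono[OF \<mu> R L]
  have "card S \<le> l \<longleftrightarrow> j < grid_count \<mu> i R L N l"
  proof
    assume "card S \<le> l"
    show "j < grid_count \<mu> i R L N l"
    proof (rule ccontr)
      assume "\<not> ?thesis"
      have "{..l} \<subseteq> S"
      proof
        fix l' assume "l' \<in> {..l}"
        then show "l' \<in> S" using mono[of l' l i N] l \<open>\<not> j < grid_count \<mu> i R L N l\<close> by (auto simp: S_def)
      qed
      then have "card {..l} \<le> card S" by (intro card_mono) (auto simp: S_def)
      then show False using \<open>card S \<le> l\<close> by simp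
    qed
  next
    assume j: "j < grid_count \<mu> i R L N l"
    have "S \<subseteq> {..<l}"
    proof
      fix l' assume "l' \<in> S"
      then have "grid_count \<mu> i R L N l' \<le> j" by (auto simp: S_def)
      then show "l' \<in> {..<l}" using j mono[of l l' i N] by (cases "l \<le> l'") auto
    qed
    then show "card S \<le> l" using card_mono[of "{..<l}" S] by simp
  qed
  then show ?thesis unfolding quantile_vector_def S_def[symmetric] using grid_point_le_iff[OF R L] by simp
qed

lemma quantile_vector_range:
  assumes "R > 0" "L > 0"
  shows "quantile_vector \<mu> i R L N j \<in> {-R..R}"
proof -
  have "card {l. l < L \<and> grid_count \<mu> i R L N l \<le> j} \<le> L"
    using card_mono[of "{..<L}" "{l. l < L \<and> grid_count \<mu> i R L N l \<le> j}"] by auto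
  then show ?thesis unfolding quantile_vector_def by (rule grid_point_range[OF assms])
qed

lemma quantile_vector_mono:
  assumes "R > 0" "L > 0" "j \<le> k"
  shows "quantile_vector \<mu> i R L N j \<le> quantile_vector \<mu> i R L N k"
proof -
  have "card {l. l < L \<and> grid_count \<mu> i R L N l \<le> j} \<le> card {l. l < L \<and> grid_count \<mu> i R L N l \<le> k}"
    using \<open>j \<le> k\<close> by (intro card_mono) auto
  then show ?thesis unfolding quantile_vector_def using grid_point_le_iff[OF assms(1,2)] by simp
qed

lemma sum_of_bool_quantile_vector_le:
  fixes \<mu> :: "(real^'n) measure"
  assumes \<mu>: "\<mu> \<in> ProbCube R" and R: "R > 0" and L: "L > 0" and l: "l < L"
  shows "(\<Sum>j<N. of_bool (quantile_vector \<mu> i R L N j \<le> grid_point R L l)) = real (grid_count \<mu> i R L N l)"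
proof -
  have "{j. j < N \<and> quantile_vector \<mu> i R L N j \<le> grid_point R L l} = {..<grid_count \<mu> i R L N l}"
    using quantile_vector_le_grid_point_iff[OF \<mu> R L l] grid_count_le[OF \<mu>, of i L N l] by auto
  then show ?thesis by (simp add: Int_def)
qed

lemma kappa_step_approx_quantile_vector:
  fixes \<mu> :: "(real^'n) measure"
  assumes \<mu>: "\<mu> \<in> ProbCube R" and R: "R > 0" and L: "L > 0" and N: "N > 0"
  shows "kappa N (\<lambda>j. step_approx R L f (quantile_vector \<mu> i R L N j))
       = f (grid_point R L L) - (\<Sum>l<L. real (grid_count \<mu> i R L N l) / N * (f (grid_point R L (Suc l)) - f (grid_point R L l)))"
proof -
  let ?q = "quantile_vector \<mu> i R L N" and ?s = "grid_point R L"
  let ?D = "\<lambda>l. f (?s (Suc l)) - f (?s l)"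
  have "(\<Sum>j<N. step_approx R L f (?q j)) = (\<Sum>j<N. f (?s L)) - (\<Sum>j<N. \<Sum>l<L. of_bool (?q j \<le> ?s l) * ?D l)"
    unfolding step_approx_def by (rule sum_subtractf)
  also have "(\<Sum>j<N. \<Sum>l<L. of_bool (?q j \<le> ?s l) * ?D l) = (\<Sum>l<L. (\<Sum>j<N. of_bool (?q j \<le> ?s l)) * ?D l)"
    by (subst sum.swap) (simp only: sum_distrib_right)
  also have "\<dots> = (\<Sum>l<L. real (grid_count \<mu> i R L N l) * ?D l)"
    by (rule sum.cong[OF refl]) (simp only: sum_of_bool_quantile_vector_le[OF \<mu> R L] lessThan_iff)
  finally show ?thesis unfolding kappa_def using N by (simp add: diff_divide_distrib sum_divide_distrib)
qed

lemma integral_step_approx_coordinate: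
  fixes \<mu> :: "(real^'n) measure"
  assumes \<mu>: "\<mu> \<in> ProbCube R"
  shows "integrable \<mu> (\<lambda>x. step_approx R L f (x$i))"
    and "(\<integral>x. step_approx R L f (x$i) \<partial>\<mu>)
       = f (grid_point R L L) - (\<Sum>l<L. grid_cdf \<mu> i R L l * (f (grid_point R L (Suc l)) - f (grid_point R L l)))"
proof -
  interpret prob_space \<mu> using \<mu> by (rule ProbCube_prob_space)
  have summand: "integrable \<mu> (\<lambda>x. of_bool (x$i \<le> grid_point R L l) * (f (grid_point R L (Suc l)) - f (grid_point R L l)))" for l
    using ProbCube_integrable_coordinate_le[OF \<mu>] by simp
  then show "integrable \<mu> (\<lambda>x. step_approx R L f (x$i))"
    unfolding step_approx_def by (intro Bochner_Integration.integrable_diff Bochner_Integration.integrable_sum) auto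
  show "(\<integral>x. step_approx R L f (x$i) \<partial>\<mu>)
       = f (grid_point R L L) - (\<Sum>l<L. grid_cdf \<mu> i R L l * (f (grid_point R L (Suc l)) - f (grid_point R L l)))"
    unfolding step_approx_def using summand
    by (simp add: Bochner_Integration.integral_diff integral_sum grid_cdf_def prob_space integral_mult_left_zero
        del: sum_of_bool_mult_eq)
qed

lemma abs_kappa_step_approx_quantile_vector_diff:
  fixes \<mu> :: "(real^'n) measure"
  assumes \<mu>: "\<mu> \<in> ProbCube R" and R: "R > 0" and L: "L > 0" and N: "N > 0"
    and B: "\<And>x. x \<in> {-R..R} \<Longrightarrow> \<bar>f x\<bar> \<le> B"
  shows "\<bar>kappa N (\<lambda>j. step_approx R L f (quantile_vector \<mu> i R L N j)) - (\<integral>x. step_approx R L f (x$i) \<partial>\<mu>)\<bar>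
    \<le> 2*B*L/N"
proof -
  let ?D = "\<lambda>l. f (grid_point R L (Suc l)) - f (grid_point R L l)"
  have "\<bar>kappa N (\<lambda>j. step_approx R L f (quantile_vector \<mu> i R L N j)) - (\<integral>x. step_approx R L f (x$i) \<partial>\<mu>)\<bar>
      = \<bar>\<Sum>l<L. (grid_cdf \<mu> i R L l - real (grid_count \<mu> i R L N l) / N) * ?D l\<bar>"
    unfolding kappa_step_approx_quantile_vector[OF \<mu> R L N] integral_step_approx_coordinate(2)[OF \<mu>]
    by (simp add: sum_subtractf[symmetric] left_diff_distrib)
  also have "\<dots> \<le> (\<Sum>l<L. (1/N) * (2*B))"
  proof (rule order_trans[OF sum_abs sum_mono])
    fix l assume l: "l \<in> {..<L}"
    have "grid_cdf \<mu> i R L l - real (grid_count \<mu> i R L N l) / N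
        = (real N * grid_cdf \<mu> i R L l - real (grid_count \<mu> i R L N l)) / N"
      using N by (simp add: diff_divide_distrib)
    then have "\<bar>grid_cdf \<mu> i R L l - real (grid_count \<mu> i R L N l) / N\<bar> \<le> 1/N"
      using abs_grid_count_error[OF \<mu>, of i L N l] N
      by (simp add: abs_divide abs_minus_commute divide_right_mono)
    moreover have "\<bar>?D l\<bar> \<le> 2*B"
      using B[OF grid_point_range[OF R L, of l]] B[OF grid_point_range[OF R L, of "Suc l"]] l by auto
    ultimately show "\<bar>(grid_cdf \<mu> i R L l - real (grid_count \<mu> i R L N l) / N) * ?D l\<bar> \<le> (1/N) * (2*B)"
      unfolding abs_mult by (intro mult_mono) auto
  qed
  also have "\<dots> = 2*B*L/N" by simp
  finally show ?thesis .
qed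

lemma abs_kappa_quantile_vector_error:
  fixes \<mu> :: "(real^'n) measure"
  assumes \<mu>: "\<mu> \<in> ProbCube R" and R: "R > 0" and L: "L > 0" and N: "N > 0"
    and f: "continuous_on {-R..R} f"
    and w: "\<And>x y. x \<in> {-R..R} \<Longrightarrow> y \<in> {-R..R} \<Longrightarrow> \<bar>x - y\<bar> \<le> 2*R/L \<Longrightarrow> \<bar>f x - f y\<bar> \<le> w"
    and B: "\<And>x. x \<in> {-R..R} \<Longrightarrow> \<bar>f x\<bar> \<le> B"
  shows "\<bar>kappa N (\<lambda>j. f (quantile_vector \<mu> i R L N j)) - (\<integral>x. f (x$i) \<partial>\<mu>)\<bar> \<le> 2*w + 2*B*L/N"
proof -
  interpret prob_space \<mu> using \<mu> by (rule ProbCube_prob_space)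
  let ?q = "quantile_vector \<mu> i R L N" and ?g = "step_approx R L f"
  have w0: "w \<ge> 0" using w[of "-R" "-R"] R by auto
  have close: "\<bar>?g x - f x\<bar> \<le> w" if "x \<in> {-R..R}" for x
    using that by (intro abs_step_approx_diff_le[OF R L] w)
  have "\<bar>f (?q j) - ?g (?q j)\<bar> \<le> w" for j
    using close[OF quantile_vector_range[OF R L]] by (simp add: abs_minus_commute)
  then have "\<bar>kappa N (\<lambda>j. f (?q j)) - kappa N (\<lambda>j. ?g (?q j))\<bar> \<le> w"
    using w0 by (intro abs_kappa_diff_le)
  moreover have "\<bar>(\<integral>x. ?g (x$i) \<partial>\<mu>) - (\<integral>x. f (x$i) \<partial>\<mu>)\<bar> \<le> w"
    using close ProbCube_space[OF \<mu>]
    by (intro abs_integral_diff_le integral_step_approx_coordinate(1)[OF \<mu>]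
        ProbCube_integrable_continuous[OF \<mu>] continuous_on_cube_coordinate[OF f]) (auto simp: cube_def)
  ultimately show ?thesis
    using abs_kappa_step_approx_quantile_vector_diff[where f=f and i=i, OF \<mu> R L N B] by linarith
qed

lemma quantile_seq_kappa_tendsto:
  fixes \<mu> :: "(real^'n) measure"
  assumes \<mu>: "\<mu> \<in> ProbCube R" and R: "R > 0" and f: "continuous_on {-R..R} f"
  shows "(\<lambda>N. kappa N (\<lambda>j. f (quantile_seq \<mu> R N i j))) \<longlonglongrightarrow> (\<integral>x. f (x$i) \<partial>\<mu>)"
proof (rule tendstoI)
  fix e :: real assume e: "e > 0"
  obtain \<delta> where \<delta>: "\<delta> > 0" "\<And>x y. x \<in> {-R..R} \<Longrightarrow> y \<in> {-R..R} \<Longrightarrow> dist y x < \<delta> \<Longrightarrow> dist (f y) (f x) < e/4"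
    using compact_uniformly_continuous[OF f compact_Icc] e unfolding uniformly_continuous_on_def
    by (metis zero_less_divide_iff zero_less_numeral)
  obtain B where B: "B > 0" "\<And>x. x \<in> f ` {-R..R} \<Longrightarrow> norm x \<le> B"
    using compact_imp_bounded[OF compact_continuous_image[OF f compact_Icc]] bounded_pos by metis
  have "filterlim (\<lambda>N. sqrt (real N)) at_top sequentially"
    by (rule filterlim_compose[OF sqrt_at_top filterlim_real_sequentially])
  then have "eventually (\<lambda>N. max 1 (max (2*R/\<delta>) (16*B/e)) < sqrt (real N)) sequentially"
    unfolding filterlim_at_top_dense by blast
  then show "eventually (\<lambda>N. dist (kappa N (\<lambda>j. f (quantile_seq \<mu> R N i j))) (\<integral>x. f (x$i) \<partial>\<mu>) < e) sequentially"
  proof (rule eventually_mono)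
    fix N assume "max 1 (max (2*R/\<delta>) (16*B/e)) < sqrt (real N)"
    moreover define r where "r = sqrt (real N)"
    ultimately have r: "1 < r" "2*R/\<delta> < r" "16*B/e < r" by auto
    then have N: "N > 0" unfolding r_def by (cases N) auto
    define L where "L = grid_size N"
    have L: "L > 0" unfolding L_def grid_size_def by simp
    have Lr: "r < L" "L \<le> r + 1" unfolding L_def grid_size_def r_def
      by (simp_all add: of_nat_nat) linarith+
    have w: "\<bar>f x - f y\<bar> \<le> e/4" if "x \<in> {-R..R}" "y \<in> {-R..R}" "\<bar>x - y\<bar> \<le> 2*R/L" for x y
    proof -
      have "2*R/\<delta> < L" using r(2) Lr(1) by linarith
      then have "2*R/L < \<delta>" using \<delta>(1) L by (simp add: field_simps)
      then show ?thesis using \<delta>(2)[OF that(2,1)] that(3) by (simp add: dist_real_def abs_minus_commute)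
    qed
    have err: "\<bar>kappa N (\<lambda>j. f (quantile_vector \<mu> i R L N j)) - (\<integral>x. f (x$i) \<partial>\<mu>)\<bar> \<le> 2*(e/4) + 2*B*L/N"
      using B by (intro abs_kappa_quantile_vector_error[OF \<mu> R L N f w]) auto
    have "2*B*L/N = 2*B*L/(r*r)" unfolding r_def by simp
    also have "\<dots> \<le> 2*B*(2*r)/(r*r)" using Lr r(1) B(1) by (intro divide_right_mono mult_left_mono) auto
    also have "\<dots> = 4*B/r" using r(1) by (simp add: field_simps)
    also have "\<dots> < e/4" using r(1,3) e by (simp add: field_simps)
    finally show "dist (kappa N (\<lambda>j. f (quantile_seq \<mu> R N i j))) (\<integral>x. f (x$i) \<partial>\<mu>) < e"
      using err unfolding quantile_seq_def L_def[symmetric] dist_real_def by linarith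
  qed
qed

lemma approx_seq_quantile_seq:
  fixes \<mu> :: "(real^'n) measure"
  assumes \<mu>: "\<mu> \<in> ProbCube R" and R: "R > 0"
  shows "approx_seq R (marginals \<mu>) (quantile_seq \<mu> R)"
proof -
  have L: "grid_size N > 0" for N by (simp add: grid_size_def)
  have "(\<lambda>N. kappa N (\<lambda>j. quantile_seq \<mu> R N i j ^ k)) \<longlonglongrightarrow> integral\<^sup>L (marginal i \<mu>) (\<lambda>x. x ^ k)" for i k
    using quantile_seq_kappa_tendsto[OF \<mu> R, of "\<lambda>x. x^k" i] integral_marginal[OF \<mu>, of "\<lambda>x. x^k" i]
    by (simp add: continuous_intros)
  moreover have "quantile_seq \<mu> R N i j \<in> {-R..R}" for N i j
    unfolding quantile_seq_def by (rule quantile_vector_range[OF R L])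
  moreover have "quantile_seq \<mu> R N i j \<le> quantile_seq \<mu> R N i k" if "j \<le> k" for N i j k
    unfolding quantile_seq_def using quantile_vector_mono[OF R L that] .
  ultimately show ?thesis unfolding approx_seq_def by auto
qed

lemma approx_seq_some:
  fixes \<mu> :: "(real^'n) measure"
  assumes "\<mu> \<in> ProbCube R" "R > 0"
  shows "approx_seq R (marginals \<mu>) (SOME \<Xi>. approx_seq R (marginals \<mu>) \<Xi>)"
  using approx_seq_quantile_seq[OF assms] by (rule someI[where P="approx_seq R (marginals \<mu>)"])

section \<open>Upper semicontinuity of the mutual pressure\<close>

lemma approx_seqs_l1_dist_eventually_le:
  fixes \<mu> \<nu> :: "(real^'n) measure"
  assumes \<mu>: "\<mu> \<in> ProbCube R" and \<nu>: "\<nu> \<in> ProbCube R" and R: "R > 0" and M: "M > 0"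
    and X: "approx_seq R (marginals \<mu>) X" and Y: "approx_seq R (marginals \<nu>) Y"
    and close: "\<And>i l. l < M \<Longrightarrow> \<bar>(\<integral>x. grid_ramp R M l (x$i) \<partial>\<nu>) - (\<integral>x. grid_ramp R M l (x$i) \<partial>\<mu>)\<bar> < c"
  shows "eventually (\<lambda>N. \<forall>i. (\<Sum>j<N. \<bar>Y N i j - X N i j\<bar>) / N \<le> 6*R/M + 2*R*c) sequentially"
proof -
  let ?dev = "\<lambda>N i l. \<bar>kappa N (\<lambda>j. grid_ramp R M l (Y N i j)) - kappa N (\<lambda>j. grid_ramp R M l (X N i j))\<bar>"
  have ramp: "continuous_on {-R..R} (grid_ramp R M l)" for l by (rule continuous_on_grid_ramp)
  have "eventually (\<lambda>N. ?dev N i l < c) sequentially" if "l < M" for i l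
  proof (rule order_tendstoD(2)[OF tendsto_rabs[OF tendsto_diff]])
    show "(\<lambda>N. kappa N (\<lambda>j. grid_ramp R M l (Y N i j))) \<longlonglongrightarrow> (\<integral>x. grid_ramp R M l (x$i) \<partial>\<nu>)"
      by (rule approx_seq_kappa_tendsto[OF \<nu> Y ramp])
    show "(\<lambda>N. kappa N (\<lambda>j. grid_ramp R M l (X N i j))) \<longlonglongrightarrow> (\<integral>x. grid_ramp R M l (x$i) \<partial>\<mu>)"
      by (rule approx_seq_kappa_tendsto[OF \<mu> X ramp])
  qed (rule close[OF that])
  then have "eventually (\<lambda>N. \<forall>i. \<forall>l\<in>{..<M}. ?dev N i l < c) sequentially"
    by (intro eventually_all_finite eventually_ball_finite ballI) auto
  moreover have "eventually (\<lambda>N. N > 0) sequentially" by (rule eventually_gt_at_top)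
  ultimately show ?thesis
  proof eventually_elim
    case (elim N)
    show ?case
    proof
      fix i
      have dev: "?dev N i l \<le> c" if "l \<in> {..<M}" for l
        using elim that less_imp_le by blast
      have "(\<Sum>j<N. \<bar>Y N i j - X N i j\<bar>) / N \<le> 3 * (2*R/M) + 2*R/M * (\<Sum>l<M. ?dev N i l)"
        using approx_seq_range[OF X] approx_seq_range[OF Y] approx_seq_sorted[OF X] approx_seq_sorted[OF Y] elim
        by (intro sorted_l1_dist_le_ramp_averages[OF R M]) auto
      also have "\<dots> \<le> 3 * (2*R/M) + 2*R/M * (M * c)"
        using sum_bounded_above[of "{..<M}" "?dev N i" c, OF dev] R by (intro add_left_mono mult_left_mono) auto
      also have "\<dots> = 6*R/M + 2*R*c" using M by simp
      finally show "(\<Sum>j<N. \<bar>Y N i j - X N i j\<bar>) / N \<le> 6*R/M + 2*R*c" .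
    qed
  qed
qed

lemma P_sym_le_of_ramp_integrals_close:
  fixes \<mu> :: "(real^'n) measure"
  assumes \<mu>: "\<mu> \<in> ProbCube R" and R: "R > 0" and h: "continuous_on (cube R) h" and e: "e > 0"
  obtains M c where "c > 0"
    "\<And>\<nu>. \<nu> \<in> ProbCube R \<Longrightarrow>
      (\<And>i l. l < M \<Longrightarrow> \<bar>(\<integral>x. grid_ramp R M l (x$i) \<partial>\<nu>) - (\<integral>x. grid_ramp R M l (x$i) \<partial>\<mu>)\<bar> < c) \<Longrightarrow>
      P_sym R h (marginals \<nu>) \<le> P_sym R h (marginals \<mu>) + ereal e"
proof -
  obtain d where d: "d > 0" and compare: "\<And>X Y N. N > 0 \<Longrightarrow> (\<And>i j. j < N \<Longrightarrow> X N i j \<in> {-R..R})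
      \<Longrightarrow> (\<And>i j. j < N \<Longrightarrow> Y N i j \<in> {-R..R}) \<Longrightarrow> (\<And>i. (\<Sum>j<N. \<bar>X N i j - Y N i j\<bar>) / N \<le> d)
      \<Longrightarrow> pressure_term h X N \<le> pressure_term h Y N + e"
    using pressure_term_le_of_l1_close[OF h e] by blast
  define M where "M = nat \<lceil>12*R/d\<rceil> + 1"
  have M: "M > 0" by (simp add: M_def)
  have "12*R/d \<le> M" unfolding M_def by linarith
  then have M_bound: "6*R/M \<le> d/2" using d R M by (simp add: field_simps)
  define c where "c = d/(4*R)"
  have c: "c > 0" "2*R*c = d/2" using d R by (simp_all add: c_def)
  show ?thesis
  proof (rule that[OF c(1)])
    fix \<nu> assume \<nu>: "\<nu> \<in> ProbCube R"
      and close: "\<And>i l. l < M \<Longrightarrow> \<bar>(\<integral>x. grid_ramp R M l (x$i) \<partial>\<nu>) - (\<integral>x. grid_ramp R M l (x$i) \<partial>\<mu>)\<bar> < c"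
    let ?X = "SOME \<Xi>. approx_seq R (marginals \<mu>) \<Xi>" and ?Y = "SOME \<Xi>. approx_seq R (marginals \<nu>) \<Xi>"
    have X: "approx_seq R (marginals \<mu>) ?X" and Y: "approx_seq R (marginals \<nu>) ?Y"
      using approx_seq_some \<mu> \<nu> R by auto
    have "eventually (\<lambda>N. \<forall>i. (\<Sum>j<N. \<bar>?Y N i j - ?X N i j\<bar>) / N \<le> 6*R/M + 2*R*c) sequentially"
      by (rule approx_seqs_l1_dist_eventually_le[OF \<mu> \<nu> R M X Y close])
    moreover have "eventually (\<lambda>N. N > 0) sequentially" by (rule eventually_gt_at_top)
    ultimately have "eventually (\<lambda>N. ereal (pressure_term h ?Y N) \<le> ereal (pressure_term h ?X N) + ereal e) sequentially"
    proof eventually_elim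
      case (elim N)
      have "pressure_term h ?Y N \<le> pressure_term h ?X N + e"
      proof (rule compare)
        show "N > 0" using elim by simp
        show "?Y N i j \<in> {-R..R}" if "j < N" for i j using approx_seq_range[OF Y that] .
        show "?X N i j \<in> {-R..R}" if "j < N" for i j using approx_seq_range[OF X that] .
        show "(\<Sum>j<N. \<bar>?Y N i j - ?X N i j\<bar>) / N \<le> d" for i
        proof -
          have "(\<Sum>j<N. \<bar>?Y N i j - ?X N i j\<bar>) / N \<le> 6*R/M + 2*R*c" using elim by blast
          then show ?thesis using M_bound c(2) by linarith
        qed
      qed
      then show ?case by simp
    qed
    then have "limsup (\<lambda>N. ereal (pressure_term h ?Y N)) \<le> limsup (\<lambda>N. ereal (pressure_term h ?X N) + ereal e)"
      by (rule Limsup_mono)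
    also have "\<dots> = limsup (\<lambda>N. ereal (pressure_term h ?X N)) + ereal e"
      by (rule Limsup_add_ereal_right) simp_all
    finally show "P_sym R h (marginals \<nu>) \<le> P_sym R h (marginals \<mu>) + ereal e"
      unfolding P_sym_def .
  qed
qed

lemma limsup_P_sym_le:
  fixes \<mu> :: "(real^'n) measure" and \<mu>s :: "nat \<Rightarrow> (real^'n) measure"
  assumes R: "R > 0" and \<mu>: "\<mu> \<in> ProbCube R" and \<mu>s: "\<And>k. \<mu>s k \<in> ProbCube R"
    and weak: "weak_star_conv R \<mu>s \<mu>" and h: "continuous_on (cube R) h"
  shows "limsup (\<lambda>k. P_sym R h (marginals (\<mu>s k))) \<le> P_sym R h (marginals \<mu>)"
proof (rule ereal_le_epsilon2)
  fix e :: real assume e: "e > 0"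
  obtain M c where c: "c > 0" and usc: "\<And>\<nu>. \<nu> \<in> ProbCube R \<Longrightarrow>
      (\<And>i l. l < M \<Longrightarrow> \<bar>(\<integral>x. grid_ramp R M l (x$i) \<partial>\<nu>) - (\<integral>x. grid_ramp R M l (x$i) \<partial>\<mu>)\<bar> < c) \<Longrightarrow>
      P_sym R h (marginals \<nu>) \<le> P_sym R h (marginals \<mu>) + ereal e"
    using P_sym_le_of_ramp_integrals_close[OF \<mu> R h e] by blast
  have "eventually (\<lambda>k. \<bar>(\<integral>x. grid_ramp R M l (x$i) \<partial>\<mu>s k) - (\<integral>x. grid_ramp R M l (x$i) \<partial>\<mu>)\<bar> < c) sequentially"
    for i l
  proof -
    have "(\<lambda>k. \<integral>x. grid_ramp R M l (x$i) \<partial>\<mu>s k) \<longlonglongrightarrow> (\<integral>x. grid_ramp R M l (x$i) \<partial>\<mu>)"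
      using weak continuous_on_cube_coordinate[OF continuous_on_grid_ramp] unfolding weak_star_conv_def by blast
    from tendstoD[OF this c] show ?thesis by (simp add: dist_real_def)
  qed
  then have "eventually (\<lambda>k. \<forall>i. \<forall>l\<in>{..<M}.
      \<bar>(\<integral>x. grid_ramp R M l (x$i) \<partial>\<mu>s k) - (\<integral>x. grid_ramp R M l (x$i) \<partial>\<mu>)\<bar> < c) sequentially"
    by (intro eventually_all_finite eventually_ball_finite ballI) auto
  then have "eventually (\<lambda>k. P_sym R h (marginals (\<mu>s k)) \<le> P_sym R h (marginals \<mu>) + ereal e) sequentially"
    by (rule eventually_mono) (auto intro!: usc \<mu>s)
  then show "limsup (\<lambda>k. P_sym R h (marginals (\<mu>s k))) \<le> P_sym R h (marginals \<mu>) + ereal e"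
    by (rule Limsup_bounded)
qed

theorem corollary2p7:
  fixes R :: real and \<mu> :: "(real^'n) measure" and \<mu>s :: "nat \<Rightarrow> (real^'n) measure"
  assumes "R > 0"
    and "\<mu> \<in> ProbCube R" and "\<And>k. \<mu>s k \<in> ProbCube R"
    and "weak_star_conv R \<mu>s \<mu>"
  shows "I_sym R \<mu> \<le> liminf (\<lambda>k. I_sym R (\<mu>s k))"
proof -
  have "ereal (\<integral>x. h x \<partial>\<mu>) - P_sym R h (marginals \<mu>) \<le> liminf (\<lambda>k. I_sym R (\<mu>s k))"
    if h: "continuous_on (cube R) h" for h
  proof -
    have integrals: "(\<lambda>k. ereal (\<integral>x. h x \<partial>\<mu>s k)) \<longlonglongrightarrow> ereal (\<integral>x. h x \<partial>\<mu>)"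
      using assms(4) h unfolding weak_star_conv_def lim_ereal by blast
    have "ereal (\<integral>x. h x \<partial>\<mu>) - P_sym R h (marginals \<mu>)
        \<le> ereal (\<integral>x. h x \<partial>\<mu>) - limsup (\<lambda>k. P_sym R h (marginals (\<mu>s k)))"
      using limsup_P_sym_le[OF assms h] by (rule ereal_minus_mono[OF order_refl])
    also have "\<dots> = liminf (\<lambda>k. ereal (\<integral>x. h x \<partial>\<mu>s k) - P_sym R h (marginals (\<mu>s k)))"
      unfolding minus_ereal_def by (simp add: ereal_liminf_lim_add[OF integrals] ereal_Liminf_uminus)
    also have "\<dots> \<le> liminf (\<lambda>k. I_sym R (\<mu>s k))"
      unfolding I_sym_def using h by (intro Liminf_mono always_eventually allI SUP_upper2[of h]) auto
    finally show ?thesis .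
  qed
  then show ?thesis unfolding I_sym_def[of R \<mu>] by (intro SUP_least) auto
qed

end
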